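(* Let $S$ be a monoid. Any two trivial left $S$-acts, each of cardinality greater than one, are geometrically equivalent (in the variety of all left $S$-acts).
   Context: A left $S$-act is a nonempty set with an action $S\times A\to A$ satisfying $1a=a$, $(st)a=s(ta)$; homomorphisms preserve the action. An $S$-act $A$ is trivial if $sa=a$ for all $s\in S$, $a\in A$. For a nonempty finite set $X$, $F_X=\coprod_{x\in X}S_x$ is the free $S$-act on $X$. For an $S$-act $G$ and a relation $T\subseteq F_X\times F_X$, $T'_G=\{\mu:F_X\to G \text{ homomorphism}: T\subseteq\ker\mu\}$ and $T''_G=\bigcap_{\mu\in T'_G}\ker\mu$ (empty intersection $=F_X\times F_X$). $S$-acts $G_1,G_2$ are geometrically equivalent iff $T''_{G_1}=T''_{G_2}$ for all nonempty finite $X$ and all $T\subseteq F_X\times F_X$. *)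

theory Defs
  imports Main
begin

definition is_act :: "'b set \<Rightarrow> ('s::monoid_mult \<Rightarrow> 'b \<Rightarrow> 'b) \<Rightarrow> bool" where
  "is_act A act \<longleftrightarrow> A \<noteq> {} \<and> (\<forall>s. \<forall>a\<in>A. act s a \<in> A) \<and>
     (\<forall>a\<in>A. act 1 a = a) \<and> (\<forall>s t. \<forall>a\<in>A. act (s * t) a = act s (act t a))"

definition trivial_act :: "'b set \<Rightarrow> ('s::monoid_mult \<Rightarrow> 'b \<Rightarrow> 'b) \<Rightarrow> bool" where
  "trivial_act A act \<longleftrightarrow> (\<forall>s. \<forall>a\<in>A. act s a = a)"

text \<open>Free act on X: the coproduct of copies S_x of S, realised as X \<times> S with
action t\<cdot>(x,s) = (x, t*s).\<close>

definition free_carrier :: "'x set \<Rightarrow> ('x \<times> 's) set" where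
  "free_carrier X = X \<times> UNIV"

definition free_act :: "'s::monoid_mult \<Rightarrow> ('x \<times> 's) \<Rightarrow> ('x \<times> 's)" where
  "free_act t p = (fst p, t * snd p)"

definition act_hom ::
  "'a set \<Rightarrow> ('s::monoid_mult \<Rightarrow> 'a \<Rightarrow> 'a) \<Rightarrow> 'b set \<Rightarrow> ('s \<Rightarrow> 'b \<Rightarrow> 'b) \<Rightarrow> ('a \<Rightarrow> 'b) \<Rightarrow> bool" where
  "act_hom A actA B actB f \<longleftrightarrow> (\<forall>a\<in>A. f a \<in> B) \<and> (\<forall>s. \<forall>a\<in>A. f (actA s a) = actB s (f a))"

definition hom_ker :: "'a set \<Rightarrow> ('a \<Rightarrow> 'b) \<Rightarrow> ('a \<times> 'a) set" where
  "hom_ker A f = {(p, q). p \<in> A \<and> q \<in> A \<and> f p = f q}"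

definition T_prime ::
  "'x set \<Rightarrow> (('x \<times> 's) \<times> ('x \<times> 's)) set \<Rightarrow> 'b set \<Rightarrow> ('s::monoid_mult \<Rightarrow> 'b \<Rightarrow> 'b)
    \<Rightarrow> (('x \<times> 's) \<Rightarrow> 'b) set" where
  "T_prime X T G actG = {\<mu>. act_hom (free_carrier X) free_act G actG \<mu> \<and> T \<subseteq> hom_ker (free_carrier X) \<mu>}"

text \<open>T''_G : intersection of kernels; the empty intersection is F_X \<times> F_X.\<close>
definition T_dprime ::
  "'x set \<Rightarrow> (('x \<times> 's) \<times> ('x \<times> 's)) set \<Rightarrow> 'b set \<Rightarrow> ('s::monoid_mult \<Rightarrow> 'b \<Rightarrow> 'b)
    \<Rightarrow> (('x \<times> 's) \<times> ('x \<times> 's)) set" where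
  "T_dprime X T G actG = (free_carrier X \<times> free_carrier X) \<inter>
     (\<Inter>\<mu>\<in>T_prime X T G actG. hom_ker (free_carrier X) \<mu>)"

text \<open>Geometric equivalence; finite sets X of variables are taken as finite
sets of natural numbers (every finite set is in bijection with one).\<close>
definition geom_equiv ::
  "'b set \<Rightarrow> ('s::monoid_mult \<Rightarrow> 'b \<Rightarrow> 'b) \<Rightarrow> 'c set \<Rightarrow> ('s \<Rightarrow> 'c \<Rightarrow> 'c) \<Rightarrow> bool" where
  "geom_equiv G1 act1 G2 act2 \<longleftrightarrow>
     (\<forall>X :: nat set. finite X \<and> X \<noteq> {} \<longrightarrow>
        (\<forall>T. T \<subseteq> free_carrier X \<times> free_carrier X \<longrightarrow>
           T_dprime X T G1 act1 = T_dprime X T G2 act2))"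

end

theory Submission
  imports Defs
begin

text \<open>A homomorphism from the free act into a trivial act is constant on each copy S_x, so it
is just a map on the variables X, and T only forces identifications between variables. Hence
T''_G consists of the pairs whose variables are equivalent under the equivalence relation on X
generated by T: such pairs are identified by every admissible map, and any other pair is
separated by the map sending one equivalence class to a and everything else to b \<noteq> a. This
description does not depend on G, as long as G has two elements.\<close>

definition var_equiv :: "(('x \<times> 's) \<times> ('x \<times> 's)) set \<Rightarrow> ('x \<times> 'x) set" where
  "var_equiv T = (map_prod fst fst ` T \<union> (map_prod fst fst ` T)\<inverse>)\<^sup>*"

lemma var_equiv_trans: "(x, y) \<in> var_equiv T \<Longrightarrow> (y, z) \<in> var_equiv T \<Longrightarrow> (x, z) \<in> var_equiv T"
  unfolding var_equiv_def by (rule rtrancl_trans)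

lemma var_equiv_refl [simp]: "(x, x) \<in> var_equiv T"
  unfolding var_equiv_def by simp

lemma var_equiv_of_mem:
  assumes "(p, q) \<in> T"
  shows "(fst p, fst q) \<in> var_equiv T" and "(fst q, fst p) \<in> var_equiv T"
proof -
  have "(fst p, fst q) \<in> map_prod fst fst ` T"
    using assms by force
  then show "(fst p, fst q) \<in> var_equiv T"
    unfolding var_equiv_def by (intro r_into_rtrancl UnI1)
  from \<open>(fst p, fst q) \<in> map_prod fst fst ` T\<close> show "(fst q, fst p) \<in> var_equiv T"
    unfolding var_equiv_def by (intro r_into_rtrancl UnI2 converseI)
qed

lemma hom_to_trivial_act_factors:
  assumes "trivial_act G act" and "act_hom (free_carrier X) free_act G act \<mu>"
    and "p \<in> free_carrier X"
  shows "\<mu> p = \<mu> (fst p, 1)"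
proof -
  obtain x s where p: "p = (x, s)" and x: "x \<in> X"
    using assms(3) unfolding free_carrier_def by auto
  have "\<mu> (x, s) = \<mu> (free_act s (x, 1))"
    unfolding free_act_def by simp
  also have "\<dots> = act s (\<mu> (x, 1))"
    using assms(2) x unfolding act_hom_def free_carrier_def by blast
  also have "\<dots> = \<mu> (x, 1)"
    using assms x unfolding trivial_act_def act_hom_def free_carrier_def by blast
  finally show ?thesis
    using p by simp
qed

lemma act_hom_to_trivial_act:
  assumes "trivial_act G act" and "\<And>x. x \<in> X \<Longrightarrow> f x \<in> G"
  shows "act_hom (free_carrier X) free_act G act (\<lambda>p. f (fst p))"
  using assms unfolding act_hom_def trivial_act_def free_carrier_def free_act_def by auto

lemma T_prime_identifies_var_equiv:
  assumes "trivial_act G act" and "\<mu> \<in> T_prime X T G act" and "(x, y) \<in> var_equiv T"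
  shows "\<mu> (x, 1) = \<mu> (y, 1)"
proof -
  have hom: "act_hom (free_carrier X) free_act G act \<mu>"
    and ker: "T \<subseteq> hom_ker (free_carrier X) \<mu>"
    using assms(2) unfolding T_prime_def by auto
  have generator: "\<mu> (fst p, 1) = \<mu> (fst q, 1)" if "(p, q) \<in> T" for p q
  proof -
    have "p \<in> free_carrier X" "q \<in> free_carrier X" "\<mu> p = \<mu> q"
      using that ker unfolding hom_ker_def by auto
    then show ?thesis
      using hom_to_trivial_act_factors[OF assms(1) hom] by metis
  qed
  from assms(3) show ?thesis
    unfolding var_equiv_def
  proof (induction rule: rtrancl_induct)
    case (step y z)
    from step.hyps(2) obtain p q where "(p, q) \<in> T"
      and "(y, z) = (fst p, fst q) \<or> (z, y) = (fst p, fst q)"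
      by auto
    then have "\<mu> (y, 1) = \<mu> (z, 1)"
      using generator by fastforce
    with step.IH show ?case
      by simp
  qed simp
qed

lemma class_indicator_in_T_prime:
  assumes "trivial_act G act" and "a \<in> G" and "b \<in> G"
    and "T \<subseteq> free_carrier X \<times> free_carrier X"
  shows "(\<lambda>p. if (x, fst p) \<in> var_equiv T then a else b) \<in> T_prime X T G act"
    (is "?\<mu> \<in> _")
proof -
  have "act_hom (free_carrier X) free_act G act ?\<mu>"
    by (rule act_hom_to_trivial_act) (use assms in auto)
  moreover have "T \<subseteq> hom_ker (free_carrier X) ?\<mu>"
  proof
    fix t assume t: "t \<in> T"
    obtain p q where pq: "t = (p, q)" by (cases t)
    have "(x, fst p) \<in> var_equiv T \<longleftrightarrow> (x, fst q) \<in> var_equiv T"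
      using var_equiv_trans var_equiv_of_mem[of p q T] t pq by metis
    then show "t \<in> hom_ker (free_carrier X) ?\<mu>"
      using t pq assms(4) unfolding hom_ker_def by auto
  qed
  ultimately show ?thesis
    unfolding T_prime_def by simp
qed

lemma T_dprime_trivial_act:
  fixes act :: "'s::monoid_mult \<Rightarrow> 'b \<Rightarrow> 'b" and T :: "(('x \<times> 's) \<times> ('x \<times> 's)) set"
  assumes "trivial_act G act" and "\<exists>a\<in>G. \<exists>b\<in>G. a \<noteq> b"
    and "T \<subseteq> free_carrier X \<times> free_carrier X"
  shows "T_dprime X T G act =
    {(p, q). p \<in> free_carrier X \<and> q \<in> free_carrier X \<and> (fst p, fst q) \<in> var_equiv T}"
proof (intro set_eqI iffI; clarify)
  fix p q assume pq: "(p, q) \<in> T_dprime X T G act"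
  then have carrier: "p \<in> free_carrier X" "q \<in> free_carrier X"
    unfolding T_dprime_def by auto
  obtain a b where ab: "a \<in> G" "b \<in> G" "a \<noteq> b"
    using assms(2) by blast
  let ?\<mu> = "\<lambda>r. if (fst p, fst r) \<in> var_equiv T then a else b"
  have "?\<mu> p = ?\<mu> q"
    using pq class_indicator_in_T_prime[OF assms(1) ab(1,2) assms(3)]
    unfolding T_dprime_def hom_ker_def by blast
  then have "(fst p, fst q) \<in> var_equiv T"
    using ab(3) by (auto split: if_splits)
  with carrier show "p \<in> free_carrier X \<and> q \<in> free_carrier X \<and> (fst p, fst q) \<in> var_equiv T"
    by simp
next
  fix p q :: "'x \<times> 's" assume carrier: "p \<in> free_carrier X" "q \<in> free_carrier X"
    and equiv: "(fst p, fst q) \<in> var_equiv T"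
  have "\<mu> p = \<mu> q" if \<mu>: "\<mu> \<in> T_prime X T G act" for \<mu>
  proof -
    have hom: "act_hom (free_carrier X) free_act G act \<mu>"
      using \<mu> unfolding T_prime_def by simp
    show ?thesis
      using T_prime_identifies_var_equiv[OF assms(1) \<mu> equiv]
        hom_to_trivial_act_factors[OF assms(1) hom] carrier by metis
  qed
  with carrier show "(p, q) \<in> T_dprime X T G act"
    unfolding T_dprime_def hom_ker_def by auto
qed

theorem corollary3p8:
  fixes G1 :: "'b set" and act1 :: "'s::monoid_mult \<Rightarrow> 'b \<Rightarrow> 'b"
    and G2 :: "'c set" and act2 :: "'s \<Rightarrow> 'c \<Rightarrow> 'c"
  assumes "is_act G1 act1" and "trivial_act G1 act1" and "\<exists>a\<in>G1. \<exists>b\<in>G1. a \<noteq> b"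
    and "is_act G2 act2" and "trivial_act G2 act2" and "\<exists>a\<in>G2. \<exists>b\<in>G2. a \<noteq> b"
  shows "geom_equiv G1 act1 G2 act2"
  unfolding geom_equiv_def
  by (simp add: T_dprime_trivial_act[OF assms(2,3)] T_dprime_trivial_act[OF assms(5,6)])

end
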